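(* Let $\phi:\mathbb{R}^n\to[-\infty,\infty]$ be a proper nearly convex function, $\Theta\subset\mathbb{R}^n$ a nearly convex set, and $G:\mathbb{R}^n\rightrightarrows\mathbb{R}^q$ a nearly convex set-valued mapping. Suppose $$\operatorname{ri}(\operatorname{dom}\phi)\cap\operatorname{ri}(\operatorname{dom} G)\cap\operatorname{ri}\Theta\neq\emptyset\quad\text{and}\quad 0\in\operatorname{ri}\big(G(\Theta\cap\operatorname{dom}\phi)\big).$$ Let $v_G(x,y^* )=\inf\{\langle -y^*,y\rangle: y\in G(x)\}$ and $h(y^* )=\inf\{\phi(x)+v_G(x,y^* ):x\in\Theta\}$, which is understood as $h(y^* )=\inf\{\phi(x)-\langle y^*,y\rangle: x\in\Theta,\ y\in G(x)\}$. Then $\mathcal{V}=\mathcal{V}_d$, where $\mathcal{V}=\inf\{\phi(x):x\in\Theta,\ 0\in G(x)\}$ and $\mathcal{V}_d=\sup_{y^*\in\mathbb{R}^q}h(y^* )$.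
   Context: A set $\Omega$ is nearly convex if there is a convex set $C$ with $C\subset\Omega\subset\overline{C}$; $\operatorname{ri}\Omega=\{a\in\Omega:\exists\delta>0,\ B(a;\delta)\cap\operatorname{aff}\Omega\subset\Omega\}$. A function is nearly convex if its epigraph is nearly convex, proper if its domain $\{\phi<\infty\}$ is nonempty and $\phi>-\infty$. For $G:\mathbb{R}^n\rightrightarrows\mathbb{R}^q$: $\operatorname{dom}G=\{x:G(x)\neq\emptyset\}$, $G$ nearly convex if $\operatorname{gph}G=\{(x,y):y\in G(x)\}$ is; $G(S)=\bigcup_{x\in S}G(x)$. Convention $\inf\emptyset=\infty$. *)

theory Defs
  imports "HOL-Analysis.Analysis"
begin

definition nearly_convex :: "'a::real_normed_vector set \<Rightarrow> bool" where
  "nearly_convex \<Omega> \<longleftrightarrow> (\<exists>C. convex C \<and> C \<subseteq> \<Omega> \<and> \<Omega> \<subseteq> closure C)"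

definition ri :: "'a::euclidean_space set \<Rightarrow> 'a set" where
  "ri \<Omega> = {a \<in> \<Omega>. \<exists>\<delta>>0. ball a \<delta> \<inter> affine hull \<Omega> \<subseteq> \<Omega>}"

definition epi :: "('a \<Rightarrow> ereal) \<Rightarrow> ('a \<times> real) set" where
  "epi \<phi> = {(x, t). \<phi> x \<le> ereal t}"

definition edom :: "('a \<Rightarrow> ereal) \<Rightarrow> 'a set" where
  "edom \<phi> = {x. \<phi> x < \<infinity>}"

definition proper_fun :: "('a \<Rightarrow> ereal) \<Rightarrow> bool" where
  "proper_fun \<phi> \<longleftrightarrow> edom \<phi> \<noteq> {} \<and> (\<forall>x. \<phi> x > -\<infinity>)"

definition nearly_convex_fun :: "('a::real_normed_vector \<Rightarrow> ereal) \<Rightarrow> bool" where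
  "nearly_convex_fun \<phi> \<longleftrightarrow> nearly_convex (epi \<phi>)"

definition sv_dom :: "('a \<Rightarrow> 'b set) \<Rightarrow> 'a set" where
  "sv_dom G = {x. G x \<noteq> {}}"

definition sv_gph :: "('a \<Rightarrow> 'b set) \<Rightarrow> ('a \<times> 'b) set" where
  "sv_gph G = {(x, y). y \<in> G x}"

definition sv_image :: "('a \<Rightarrow> 'b set) \<Rightarrow> 'a set \<Rightarrow> 'b set" where
  "sv_image G S = (\<Union>x\<in>S. G x)"

end

theory Submission
  imports Defs
begin

(*
  Let A be the set of pairs (y, t) with y \<in> G x and \<phi> x \<le> t for some x \<in> \<Theta>. The primal value
  is the infimum of t over (0, t) \<in> A, and h at a dual vector g is the infimum of t - g \<bullet> y over
  A. The qualification condition on relative interiors makes A nearly convex, because the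
  closure of an intersection of convex sets with a common relative interior point is the
  intersection of their closures. If the primal value v is finite, (0, v) lies on the vertical
  line through A but not in ri A, so a proper separation yields a normal (g, \<beta>); upward
  closedness of A forces \<beta> \<ge> 0, and 0 \<in> ri (fst ` A) rules out \<beta> = 0, so -g/\<beta> attains the
  dual value v.
*)

lemma ri_eq_rel_interior: "ri S = rel_interior S"
  unfolding ri_def using mem_rel_interior_ball by blast

lemma rel_interior_eq_if_closure_sandwich:
  fixes C :: "'n::euclidean_space set"
  assumes "convex C" "C \<subseteq> S" "S \<subseteq> closure C"
  shows "rel_interior S = rel_interior C"
proof
  have "affine hull S = affine hull (closure C)"
    using assms(2,3) closure_subset hull_mono
    by (metis closure_same_affine_hull subset_antisym)
  then have "rel_interior S \<subseteq> rel_interior (closure C)"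
    using rel_interior_mono[OF assms(3)] by simp
  then show "rel_interior S \<subseteq> rel_interior C"
    using convex_rel_interior_closure[OF assms(1)] by simp
next
  have "affine hull C = affine hull S"
    using assms(2,3) hull_mono closure_same_affine_hull by (metis subset_antisym)
  then show "rel_interior C \<subseteq> rel_interior S"
    by (rule rel_interior_mono[OF assms(2)])
qed

lemma nearly_convex_rel_interior:
  fixes S :: "'n::euclidean_space set"
  assumes "nearly_convex S"
  shows "convex (rel_interior S)" and "S \<subseteq> closure (rel_interior S)"
    and "rel_interior (rel_interior S) = rel_interior S"
proof -
  obtain C where C: "convex C" "C \<subseteq> S" "S \<subseteq> closure C"
    using assms unfolding nearly_convex_def by blast
  then have ri: "rel_interior S = rel_interior C"
    by (rule rel_interior_eq_if_closure_sandwich)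
  then show "convex (rel_interior S)"
    using C(1) by (simp add: convex_rel_interior)
  show "S \<subseteq> closure (rel_interior S)"
    using C(1,3) ri by (simp add: convex_closure_rel_interior)
  show "rel_interior (rel_interior S) = rel_interior S"
    using C(1) ri by (simp add: rel_interior_rel_interior)
qed

lemma convex_imp_nearly_convex: "convex S \<Longrightarrow> nearly_convex S"
  unfolding nearly_convex_def using closure_subset by blast

lemma nearly_convex_linear_image:
  fixes f :: "'m::euclidean_space \<Rightarrow> 'n::real_normed_vector"
  assumes "linear f" "nearly_convex S"
  shows "nearly_convex (f ` S)"
proof -
  obtain C where C: "convex C" "C \<subseteq> S" "S \<subseteq> closure C"
    using assms(2) unfolding nearly_convex_def by blast
  have "f ` S \<subseteq> closure (f ` C)"
    using C(3) closure_linear_image_subset[OF assms(1)] by blast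
  then show ?thesis
    unfolding nearly_convex_def using C convex_linear_image[OF assms(1)] by blast
qed

lemma rel_interior_nearly_convex_linear_image:
  fixes f :: "'m::euclidean_space \<Rightarrow> 'n::euclidean_space"
  assumes "linear f" "nearly_convex S"
  shows "rel_interior (f ` S) = f ` rel_interior S"
proof -
  obtain C where C: "convex C" "C \<subseteq> S" "S \<subseteq> closure C"
    using assms(2) unfolding nearly_convex_def by blast
  have "f ` S \<subseteq> closure (f ` C)"
    using C(3) closure_linear_image_subset[OF assms(1)] by blast
  then have "rel_interior (f ` S) = rel_interior (f ` C)"
    using C convex_linear_image[OF assms(1)]
    by (intro rel_interior_eq_if_closure_sandwich) auto
  also have "\<dots> = f ` rel_interior C"
    using rel_interior_convex_linear_image[OF assms(1) C(1)] by simp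
  also have "\<dots> = f ` rel_interior S"
    using rel_interior_eq_if_closure_sandwich[OF C] by simp
  finally show ?thesis .
qed

lemma nearly_convex_Times:
  assumes "nearly_convex S" "nearly_convex T"
  shows "nearly_convex (S \<times> T)"
proof -
  obtain C D where "convex C" "C \<subseteq> S" "S \<subseteq> closure C"
    and "convex D" "D \<subseteq> T" "T \<subseteq> closure D"
    using assms unfolding nearly_convex_def by metis
  then show ?thesis
    unfolding nearly_convex_def
    by (intro exI[of _ "C \<times> D"]) (auto simp: convex_Times closure_Times)
qed

lemma rel_interior_nearly_convex_Times:
  fixes S :: "'m::euclidean_space set" and T :: "'n::euclidean_space set"
  assumes "nearly_convex S" "nearly_convex T"
  shows "rel_interior (S \<times> T) = rel_interior S \<times> rel_interior T"
proof -
  obtain C D where C: "convex C" "C \<subseteq> S" "S \<subseteq> closure C"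
    and D: "convex D" "D \<subseteq> T" "T \<subseteq> closure D"
    using assms unfolding nearly_convex_def by metis
  have "rel_interior (S \<times> T) = rel_interior (C \<times> D)"
    using C D by (intro rel_interior_eq_if_closure_sandwich) (auto simp: convex_Times closure_Times)
  then show ?thesis
    using rel_interior_Times[OF C(1) D(1)] rel_interior_eq_if_closure_sandwich[OF C]
      rel_interior_eq_if_closure_sandwich[OF D] by simp
qed

lemma nearly_convex_Inter:
  fixes \<F> :: "'n::euclidean_space set set"
  assumes "\<And>S. S \<in> \<F> \<Longrightarrow> nearly_convex S" and "\<Inter>(rel_interior ` \<F>) \<noteq> {}"
  shows "nearly_convex (\<Inter>\<F>)"
proof -
  note nc = nearly_convex_rel_interior[OF assms(1)]
  have "rel_interior ` rel_interior ` \<F> = rel_interior ` \<F>"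
    unfolding image_image by (rule image_cong[OF refl]) (rule nc(3))
  then have "closure (\<Inter>(rel_interior ` \<F>)) = \<Inter>(closure ` rel_interior ` \<F>)"
    using nc(1) assms(2) by (intro closure_Inter_convex) auto
  moreover have "\<Inter>\<F> \<subseteq> \<Inter>(closure ` rel_interior ` \<F>)"
    using nc(2) by blast
  moreover have "\<Inter>(rel_interior ` \<F>) \<subseteq> \<Inter>\<F>"
    using rel_interior_subset by blast
  moreover have "convex (\<Inter>(rel_interior ` \<F>))"
    using nc(1) by (simp add: convex_INT)
  ultimately show ?thesis
    unfolding nearly_convex_def by (metis closure_subset)
qed

lemma nearly_convex_proper_separation:
  fixes S :: "'n::euclidean_space set"
  assumes "nearly_convex S" "z \<in> affine hull S" "z \<notin> rel_interior S"
  obtains a where "\<And>x. x \<in> S \<Longrightarrow> a \<bullet> z \<le> a \<bullet> x" and "\<exists>x\<in>S. a \<bullet> z < a \<bullet> x"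
proof -
  note nc = nearly_convex_rel_interior[OF assms(1)]
  have "S \<noteq> {}"
    using assms(2) by auto
  then have "rel_interior S \<noteq> {}"
    using nc(2) by auto
  then obtain a b where a: "z + a \<in> affine hull (insert z (rel_interior S))" "a \<noteq> 0"
    and b: "a \<bullet> z \<le> b" "\<And>x. x \<in> rel_interior S \<Longrightarrow> b \<le> a \<bullet> x"
    using separating_hyperplane_set_point_inaff[OF nc(1) _ assms(3)] by metis
  have "closure (rel_interior S) \<subseteq> {x. b \<le> a \<bullet> x}"
    using b(2) by (intro closure_minimal) (auto simp: closed_halfspace_ge)
  then have le: "a \<bullet> z \<le> a \<bullet> x" if "x \<in> S" for x
    using that nc(2) b(1) by fastforce
  moreover have "\<exists>x\<in>S. a \<bullet> z < a \<bullet> x"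
  proof (rule ccontr)
    assume "\<not> ?thesis"
    then have "S \<subseteq> {x. a \<bullet> x = a \<bullet> z}"
      using le by force
    then have "affine hull S \<subseteq> {x. a \<bullet> x = a \<bullet> z}"
      by (intro hull_minimal) (auto simp: affine_hyperplane)
    moreover have "affine hull (insert z (rel_interior S)) \<subseteq> affine hull S"
      using assms(2) rel_interior_subset hull_subset[of S affine]
      by (intro hull_minimal) (auto simp: affine_affine_hull)
    ultimately have "a \<bullet> (z + a) = a \<bullet> z"
      using a(1) by blast
    then show False
      using a(2) by (simp add: inner_add_right)
  qed
  ultimately show ?thesis
    using that by blast
qed

lemma inner_eq_0_if_nonneg_rel_interior:
  fixes S :: "'n::euclidean_space set"
  assumes "0 \<in> rel_interior S" "\<And>x. x \<in> S \<Longrightarrow> 0 \<le> g \<bullet> x" "y \<in> S"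
  shows "g \<bullet> y = 0"
proof (cases "y = 0")
  case False
  obtain e where e: "e > 0" "ball 0 e \<inter> affine hull S \<subseteq> S"
    using assms(1) mem_rel_interior_ball by blast
  define c where "c = e / (2 * norm y)"
  have "c > 0" "norm ((- c) *\<^sub>R y) < e"
    using e(1) False by (simp_all add: c_def)
  have "affine hull S = span S"
    using assms(1) rel_interior_subset hull_subset by (metis affine_hull_span_0 subsetD)
  then have "(- c) *\<^sub>R y \<in> affine hull S"
    using assms(3) by (simp add: span_base span_mul span_neg)
  then have "(- c) *\<^sub>R y \<in> S"
    using e(2) \<open>norm ((- c) *\<^sub>R y) < e\<close> by (auto simp: dist_norm)
  then have "0 \<le> - c * (g \<bullet> y)"
    using assms(2) by fastforce
  then have "g \<bullet> y \<le> 0"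
    using \<open>c > 0\<close> by (simp add: mult_le_0_iff)
  then show ?thesis
    using assms(2,3) by (simp add: antisym)
qed simp

lemma Lagrange_multiplier_upward_closed:
  fixes A :: "('n::euclidean_space \<times> real) set"
  assumes "nearly_convex A"
    and upward: "\<And>y t s. (y, t) \<in> A \<Longrightarrow> t \<le> s \<Longrightarrow> (y, s) \<in> A"
    and "0 \<in> rel_interior (fst ` A)"
    and lower: "\<And>t. (0, t) \<in> A \<Longrightarrow> v \<le> t"
  obtains g where "\<And>y t. (y, t) \<in> A \<Longrightarrow> v \<le> t + g \<bullet> y"
proof -
  obtain t0 where t0: "(0, t0) \<in> A"
    using assms(3) rel_interior_subset by fastforce
  have vertical: "(0, s) \<in> affine hull A" for s
  proof -
    have "(t0 + 1 - s) *\<^sub>R (0, t0) + (s - t0) *\<^sub>R (0, t0 + 1) \<in> affine hull A"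
      using t0 upward[OF t0, of "t0 + 1"] hull_subset[of A affine]
      by (intro mem_affine[OF affine_affine_hull]) auto
    then show ?thesis
      by (simp add: algebra_simps)
  qed
  have "(0, v) \<notin> rel_interior A"
  proof
    assume "(0, v) \<in> rel_interior A"
    then obtain e where "e > 0" "ball (0, v) e \<inter> affine hull A \<subseteq> A"
      using mem_rel_interior_ball by blast
    then have "(0, v - e / 2) \<in> A"
      using vertical by (auto simp: dist_Pair_Pair dist_real_def)
    then show False
      using lower \<open>e > 0\<close> by fastforce
  qed
  then obtain a where sep: "\<And>x. x \<in> A \<Longrightarrow> a \<bullet> (0, v) \<le> a \<bullet> x"
    and strict: "\<exists>x\<in>A. a \<bullet> (0, v) < a \<bullet> x"
    using nearly_convex_proper_separation[OF assms(1) vertical] by blast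
  obtain g \<beta> where a: "a = (g, \<beta>)"
    by fastforce
  have sep': "\<beta> * v \<le> g \<bullet> y + \<beta> * t" if "(y, t) \<in> A" for y t
    using sep[OF that] by (simp add: a inner_Pair)
  have "\<beta> \<ge> 0"
  proof (rule ccontr)
    assume "\<not> \<beta> \<ge> 0"
    moreover have "\<beta> * v \<le> \<beta> * (t0 + \<bar>v - t0\<bar> + 1)"
      using sep'[OF upward[OF t0, of "t0 + \<bar>v - t0\<bar> + 1"]] by simp
    ultimately show False
      by (simp add: mult_le_cancel_left)
  qed
  moreover have "\<beta> \<noteq> 0"
  proof
    assume "\<beta> = 0"
    then have "0 \<le> g \<bullet> y" if "y \<in> fst ` A" for y
      using sep' that by fastforce
    then have "g \<bullet> y = 0" if "y \<in> fst ` A" for y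
      using inner_eq_0_if_nonneg_rel_interior[OF assms(3)] that by blast
    then show False
      using strict \<open>\<beta> = 0\<close> by (force simp: a inner_Pair)
  qed
  ultimately have "v \<le> t + (inverse \<beta> *\<^sub>R g) \<bullet> y" if "(y, t) \<in> A" for y t
    using sep'[OF that] by (simp add: field_simps)
  then show ?thesis
    using that by blast
qed

lemma strong_duality_upward_closed:
  fixes A :: "('n::euclidean_space \<times> real) set"
  assumes "nearly_convex A"
    and upward: "\<And>y t s. (y, t) \<in> A \<Longrightarrow> t \<le> s \<Longrightarrow> (y, s) \<in> A"
    and "0 \<in> rel_interior (fst ` A)"
  shows "Inf {ereal t | t. (0, t) \<in> A} = (SUP g. Inf {ereal (t - g \<bullet> y) | y t. (y, t) \<in> A})"
    (is "?primal = ?dual")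
proof (rule antisym)
  obtain t0 where "(0, t0) \<in> A"
    using assms(3) rel_interior_subset by fastforce
  then have "?primal \<le> ereal t0"
    by (blast intro: Inf_lower)
  then show "?primal \<le> ?dual"
  proof (cases ?primal)
    case (real v)
    have "ereal v \<le> ereal t" if "(0, t) \<in> A" for t
      unfolding real[symmetric] using that by (blast intro: Inf_lower)
    then have lower: "v \<le> t" if "(0, t) \<in> A" for t
      using that by simp
    obtain g where "\<And>y t. (y, t) \<in> A \<Longrightarrow> v \<le> t + g \<bullet> y"
      by (rule Lagrange_multiplier_upward_closed[OF assms(1) _ assms(3) lower]) (blast intro: upward)+
    then have "ereal v \<le> Inf {ereal (t - (- g) \<bullet> y) | y t. (y, t) \<in> A}"
      by (auto intro: Inf_greatest)
    also have "\<dots> \<le> ?dual"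
      by (rule SUP_upper) simp
    finally show ?thesis
      using real by simp
  qed simp_all
next
  show "?dual \<le> ?primal"
  proof (intro SUP_least Inf_greatest)
    fix g r
    assume "r \<in> {ereal t | t. (0, t) \<in> A}"
    then show "Inf {ereal (t - g \<bullet> y) | y t. (y, t) \<in> A} \<le> r"
      by (force intro: Inf_lower)
  qed
qed

definition value_epigraph :: "('a \<Rightarrow> ereal) \<Rightarrow> 'a set \<Rightarrow> ('a \<Rightarrow> 'b set) \<Rightarrow> ('b \<times> real) set" where
  "value_epigraph \<phi> \<Theta> G = {(y, t). \<exists>x\<in>\<Theta>. y \<in> G x \<and> \<phi> x \<le> ereal t}"

lemma edom_eq_fst_epi: "edom \<phi> = fst ` epi \<phi>"
proof (intro set_eqI iffI)
  fix x
  assume "x \<in> edom \<phi>"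
  then show "x \<in> fst ` epi \<phi>"
    unfolding epi_def edom_def by (cases "\<phi> x") force+
qed (auto simp: edom_def epi_def)

lemma sv_dom_eq_fst_gph: "sv_dom G = fst ` sv_gph G"
  unfolding sv_dom_def sv_gph_def by force

lemma value_epigraph_upward:
  "(y, t) \<in> value_epigraph \<phi> \<Theta> G \<Longrightarrow> t \<le> s \<Longrightarrow> (y, s) \<in> value_epigraph \<phi> \<Theta> G"
  unfolding value_epigraph_def by auto (meson ereal_less_eq(3) order_trans)

lemma fst_value_epigraph: "fst ` value_epigraph \<phi> \<Theta> G = sv_image G (\<Theta> \<inter> edom \<phi>)"
  unfolding value_epigraph_def sv_image_def edom_eq_fst_epi by (force simp: epi_def)

lemma nearly_convex_value_epigraph:
  fixes \<phi> :: "'a::euclidean_space \<Rightarrow> ereal" and G :: "'a \<Rightarrow> 'b::euclidean_space set"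
  assumes "nearly_convex_fun \<phi>" "nearly_convex \<Theta>" "nearly_convex (sv_gph G)"
    and "rel_interior (edom \<phi>) \<inter> rel_interior (sv_dom G) \<inter> rel_interior \<Theta> \<noteq> {}"
  shows "nearly_convex (value_epigraph \<phi> \<Theta> G)"
proof -
  define lift_gph :: "('a \<times> 'b) \<times> real \<Rightarrow> 'a \<times> 'b \<times> real"
    where "lift_gph = (\<lambda>((x, y), t). (x, y, t))"
  define lift_epi :: "('a \<times> real) \<times> 'b \<Rightarrow> 'a \<times> 'b \<times> real"
    where "lift_epi = (\<lambda>((x, t), y). (x, y, t))"
  have lin: "linear lift_gph" "linear lift_epi"
    unfolding lift_gph_def lift_epi_def by (auto simp: linear_iff)
  define \<F> where "\<F> = {\<Theta> \<times> UNIV, lift_gph ` (sv_gph G \<times> UNIV), lift_epi ` (epi \<phi> \<times> UNIV)}"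
  note UNIV = convex_imp_nearly_convex[OF convex_UNIV]
  have nc: "nearly_convex (sv_gph G \<times> UNIV :: (('a \<times> 'b) \<times> real) set)"
    "nearly_convex (epi \<phi> \<times> UNIV :: (('a \<times> real) \<times> 'b) set)"
    "nearly_convex (\<Theta> \<times> UNIV :: ('a \<times> 'b \<times> real) set)"
    using assms(1-3) nearly_convex_Times[OF _ UNIV] unfolding nearly_convex_fun_def by blast+
  have ri_lift: "rel_interior (\<Theta> \<times> UNIV) = rel_interior \<Theta> \<times> (UNIV :: ('b \<times> real) set)"
    "rel_interior (lift_gph ` (sv_gph G \<times> UNIV)) = lift_gph ` (rel_interior (sv_gph G) \<times> UNIV)"
    "rel_interior (lift_epi ` (epi \<phi> \<times> UNIV)) = lift_epi ` (rel_interior (epi \<phi>) \<times> UNIV)"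
    using assms(1-3) unfolding nearly_convex_fun_def
    by (simp_all add: rel_interior_nearly_convex_Times[OF _ UNIV]
        rel_interior_nearly_convex_linear_image[OF lin(1) nc(1)]
        rel_interior_nearly_convex_linear_image[OF lin(2) nc(2)])
  have "nearly_convex S" if "S \<in> \<F>" for S
    using that lin nc unfolding \<F>_def by (auto intro: nearly_convex_linear_image)
  moreover obtain x0 where "x0 \<in> rel_interior (edom \<phi>)" "x0 \<in> rel_interior (sv_dom G)"
    "x0 \<in> rel_interior \<Theta>"
    using assms(4) by blast
  then obtain y0 t0 where "(x0, y0) \<in> rel_interior (sv_gph G)" "(x0, t0) \<in> rel_interior (epi \<phi>)"
    using assms(1,3) unfolding edom_eq_fst_epi sv_dom_eq_fst_gph nearly_convex_fun_def
    by (force simp: rel_interior_nearly_convex_linear_image[OF linear_fst])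
  then have "(x0, y0, t0) \<in> \<Inter>(rel_interior ` \<F>)"
    using \<open>x0 \<in> rel_interior \<Theta>\<close> unfolding \<F>_def
    by (simp add: ri_lift) (force simp: lift_gph_def lift_epi_def)
  ultimately have "nearly_convex (snd ` \<Inter>\<F>)"
    by (intro nearly_convex_linear_image[OF linear_snd] nearly_convex_Inter) auto
  moreover have "snd ` \<Inter>\<F> = value_epigraph \<phi> \<Theta> G"
    unfolding \<F>_def value_epigraph_def lift_gph_def lift_epi_def
    by (force simp: sv_gph_def epi_def)
  ultimately show ?thesis
    by simp
qed

lemma Inf_diff_eq_Inf_epigraph:
  fixes f :: "'i \<Rightarrow> ereal" and c :: "'i \<Rightarrow> real"
  assumes "\<And>i. i \<in> I \<Longrightarrow> f i > -\<infinity>"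
  shows "Inf {f i - ereal (c i) | i. i \<in> I} = Inf {ereal (t - c i) | i t. i \<in> I \<and> f i \<le> ereal t}"
proof (rule antisym)
  show "Inf {f i - ereal (c i) | i. i \<in> I} \<le> Inf {ereal (t - c i) | i t. i \<in> I \<and> f i \<le> ereal t}"
  proof (rule Inf_greatest, safe)
    fix i t
    assume "i \<in> I" "f i \<le> ereal t"
    then have "f i - ereal (c i) \<le> ereal (t - c i)"
      using ereal_minus_mono[of "f i" "ereal t" "ereal (c i)" "ereal (c i)"] by simp
    then show "Inf {f i - ereal (c i) | i. i \<in> I} \<le> ereal (t - c i)"
      using \<open>i \<in> I\<close> by (blast intro: Inf_lower2)
  qed
next
  show "Inf {ereal (t - c i) | i t. i \<in> I \<and> f i \<le> ereal t} \<le> Inf {f i - ereal (c i) | i. i \<in> I}"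
  proof (rule Inf_greatest, safe)
    fix i
    assume "i \<in> I"
    then show "Inf {ereal (t - c i) | i t. i \<in> I \<and> f i \<le> ereal t} \<le> f i - ereal (c i)"
      using assms[OF \<open>i \<in> I\<close>] by (cases "f i") (force intro: Inf_lower)+
  qed
qed

theorem theorem7p3:
  fixes \<phi> :: "'a::euclidean_space \<Rightarrow> ereal"
    and \<Theta> :: "'a set"
    and G :: "'a \<Rightarrow> 'b::euclidean_space set"
  assumes "proper_fun \<phi>" and "nearly_convex_fun \<phi>"
    and "nearly_convex \<Theta>"
    and "nearly_convex (sv_gph G)"
    and "ri (edom \<phi>) \<inter> ri (sv_dom G) \<inter> ri \<Theta> \<noteq> {}"
    and "0 \<in> ri (sv_image G (\<Theta> \<inter> edom \<phi>))"
  shows "Inf {\<phi> x | x. x \<in> \<Theta> \<and> 0 \<in> G x}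
       = (SUP ys::'b. Inf {\<phi> x - ereal (inner ys y) | x y. x \<in> \<Theta> \<and> y \<in> G x})"
proof -
  define A where "A = value_epigraph \<phi> \<Theta> G"
  have nc: "nearly_convex A"
    using nearly_convex_value_epigraph[OF assms(2-4)] assms(5)
    unfolding A_def ri_eq_rel_interior by blast
  have ri0: "0 \<in> rel_interior (fst ` A)"
    using assms(6) unfolding A_def fst_value_epigraph ri_eq_rel_interior .
  have duality:
    "Inf {ereal t | t. (0, t) \<in> A} = (SUP g. Inf {ereal (t - g \<bullet> y) | y t. (y, t) \<in> A})"
    by (rule strong_duality_upward_closed[OF nc _ ri0])
      (blast intro: value_epigraph_upward[of _ _ \<phi> \<Theta> G, folded A_def])
  have "\<phi> x > -\<infinity>" for x
    using assms(1) unfolding proper_fun_def by blast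
  then have "Inf {\<phi> x | x. x \<in> \<Theta> \<and> 0 \<in> G x} = Inf {ereal t | t. (0, t) \<in> A}"
    using Inf_diff_eq_Inf_epigraph[of "{x. x \<in> \<Theta> \<and> 0 \<in> G x}" \<phi> "\<lambda>_. 0"]
    by (simp add: A_def value_epigraph_def) (rule arg_cong[where f = Inf]; blast)
  moreover have "Inf {\<phi> x - ereal (inner ys y) | x y. x \<in> \<Theta> \<and> y \<in> G x}
      = Inf {ereal (t - ys \<bullet> y) | y t. (y, t) \<in> A}" for ys
    using \<open>\<And>x. \<phi> x > -\<infinity>\<close>
      Inf_diff_eq_Inf_epigraph[of "{(x, y). x \<in> \<Theta> \<and> y \<in> G x}" "\<phi> \<circ> fst" "\<lambda>(x, y). ys \<bullet> y"]
    by (simp add: A_def value_epigraph_def) (rule arg_cong[where f = Inf]; blast)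
  ultimately show ?thesis
    using duality by simp
qed

end
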